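(* Let $p$ be a prime, $\overline{\mathbb{F}}_p$ an algebraic closure of $\mathbb{F}_p$, and let $V$ be a finite subgroup of the additive group of $\overline{\mathbb{F}}_p$. For any finite additive subgroup $U\subseteq\overline{\mathbb{F}}_p$ put $L_U(T)=\prod_{u\in U}(T-u)$. Let $f(x)\in\overline{\mathbb{F}}_p[x]$ and $h(T,x)=L_V(T)-f(x)\in\overline{\mathbb{F}}_p[T,x]$. Then $h(T,x)$ is reducible in $\overline{\mathbb{F}}_p[T,x]$ if and only if there exist a polynomial $g(x)\in\overline{\mathbb{F}}_p[x]$ and a proper subgroup $W\subsetneq V$ such that $f(x)=L_{W'}(g(x))$, where $W'=L_W(V)=\{L_W(v):v\in V\}$.
   Context: For a finite additive subgroup $U$ of $\overline{\mathbb{F}}_p$, $L_U(T)$ is a separable $\mathbb{F}_p$-linear (additive) polynomial of degree $|U|$, and $L_U:\overline{\mathbb{F}}_p\to\overline{\mathbb{F}}_p$ is an additive homomorphism with kernel $U$. *)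

theory Defs
  imports "HOL-Computational_Algebra.Computational_Algebra"
begin

definition finite_additive_subgroup :: "'a::field set \<Rightarrow> bool" where
  "finite_additive_subgroup U \<longleftrightarrow> finite U \<and> 0 \<in> U \<and>
     (\<forall>a\<in>U. \<forall>b\<in>U. a + b \<in> U) \<and> (\<forall>a\<in>U. - a \<in> U)"

definition subspace_poly :: "'a::field set \<Rightarrow> 'a poly" where
  "subspace_poly U = (\<Prod>u\<in>U. [:- u, 1:])"

definition algebraic_over_prime_field :: "'a::field itself \<Rightarrow> bool" where
  "algebraic_over_prime_field TYPE('a) \<longleftrightarrow>
     (\<forall>x::'a. \<exists>q. q \<noteq> 0 \<and> (\<forall>i. coeff q i \<in> range of_int) \<and> poly q x = 0)"

text \<open>Bivariate polynomials in T and x are represented as 'a poly poly: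
  the outer variable is T, the coefficients are polynomials in x.
  h(T,x) = L_V(T) - f(x).\<close>
definition h_poly :: "'a::field set \<Rightarrow> 'a poly \<Rightarrow> 'a poly poly" where
  "h_poly V f = map_poly (\<lambda>c. [:c:]) (subspace_poly V) - [:f:]"

end

theory Submission
  imports Defs
begin

(*
  If f = L_W'(g), then L_V = L_W' o L_W, so L_W(T) - g(x) divides
  h = L_W'(L_W(T)) - L_W'(g(x)); its T-degree |W| lies strictly between 0 and |V|.

  Conversely, a proper factor of h gives a monic irreducible factor A of L_V(T) - f over
  K = F(x). Let W be the stabiliser of A under the translations T -> T + v, v in V. The
  |V|/|W| distinct translates of A are irreducible factors of the translation-invariant
  L_V(T) - f, so deg A <= |W|, and since A(T) - A(0) vanishes on W it equals L_W; thus
  A = L_W - g with g in K. Now A divides both L_V - f and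
  L_V - L_W'(g) = (L_W' - L_W'(g)) o L_W, hence the constant L_W'(g) - f, which must vanish.
  Finally g is a root of the monic polynomial L_W'(T) - f over F[x], so g lies in F[x].
*)

lemma finite_additive_subgroupD:
  assumes "finite_additive_subgroup U"
  shows "finite U" "0 \<in> U" "a \<in> U \<Longrightarrow> b \<in> U \<Longrightarrow> a + b \<in> U" "a \<in> U \<Longrightarrow> - a \<in> U"
    "a \<in> U \<Longrightarrow> b \<in> U \<Longrightarrow> a - b \<in> U"
proof -
  show U: "finite U" "0 \<in> U" "a \<in> U \<Longrightarrow> b \<in> U \<Longrightarrow> a + b \<in> U" "a \<in> U \<Longrightarrow> - a \<in> U" for a b
    using assms unfolding finite_additive_subgroup_def by blast+
  show "a \<in> U \<Longrightarrow> b \<in> U \<Longrightarrow> a - b \<in> U"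
    using U(3)[of a "- b"] U(4)[of b] by simp
qed

lemma card_gt_0_if_finite_additive_subgroup: "finite_additive_subgroup U \<Longrightarrow> 0 < card U"
  using finite_additive_subgroupD(1,2) card_gt_0_iff by blast

section \<open>Monic polynomials and irreducible factors\<close>

lemma monic_dvd_imp_eq:
  fixes p q :: "'a::idom poly"
  assumes "lead_coeff p = 1" "lead_coeff q = 1" "p dvd q" "degree q \<le> degree p"
  shows "p = q"
proof -
  obtain r where r: "q = p * r" using assms(3) ..
  have "p \<noteq> 0" "r \<noteq> 0" using assms(1,2) r by auto
  then have "degree r = 0" using assms(4) r degree_mult_eq by fastforce
  then obtain c where "r = [:c:]" by (rule degree_eq_zeroE)
  moreover have "lead_coeff r = 1" using assms(1,2) r by (simp add: lead_coeff_mult)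
  ultimately show ?thesis using r by (simp add: one_pCons)
qed

lemma
  fixes p :: "'a::comm_ring_1 poly"
  assumes "0 < degree p"
  shows degree_diff_const: "degree (p - [:c:]) = degree p"
    and lead_coeff_diff_const: "lead_coeff (p - [:c:]) = lead_coeff p"
proof -
  have eq: "p - [:c:] = [:- c:] + p" by simp
  have lt: "degree [:- c:] < degree p" using assms by simp
  show "degree (p - [:c:]) = degree p" unfolding eq using lt by (rule degree_add_eq_right)
  show "lead_coeff (p - [:c:]) = lead_coeff p" unfolding eq using lt by (rule lead_coeff_add_le)
qed

lemma const_eq_0_if_dvd:
  fixes p :: "'a::idom poly"
  assumes "p dvd [:c:]" "0 < degree p"
  shows "c = 0"
  using dvd_imp_degree_le[OF assms(1)] assms(2) by (cases "c = 0") auto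

lemma reducible_monic_poly_iff:
  fixes h :: "'a::idom poly"
  assumes monic: "lead_coeff h = 1" and deg: "0 < degree h"
  shows "\<not> irreducible h \<longleftrightarrow> (\<exists>a. a dvd h \<and> 0 < degree a \<and> degree a < degree h)"
proof
  have units_const: "degree u = 0" if "u dvd 1" for u :: "'a poly"
    using that by (auto simp: is_unit_poly_iff)
  assume "\<not> irreducible h"
  moreover have "h \<noteq> 0" "\<not> h dvd 1" using deg units_const by auto
  ultimately obtain a b where ab: "h = a * b" "\<not> a dvd 1" "\<not> b dvd 1"
    unfolding irreducible_def by blast
  have lc: "lead_coeff a * lead_coeff b = 1" using monic ab(1) by (simp add: lead_coeff_mult)
  have "0 < degree x" if "\<not> x dvd 1" "lead_coeff x dvd 1" for x :: "'a poly"
    using that degree_0_id[of x] is_unit_poly_iff[of x] by (cases "degree x") auto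
  moreover have "lead_coeff a dvd 1" "lead_coeff b dvd 1"
    using lc dvdI[of 1 "lead_coeff a" "lead_coeff b"] dvdI[of 1 "lead_coeff b" "lead_coeff a"]
    by (simp_all add: mult.commute)
  ultimately have "0 < degree a" "0 < degree b" using ab(2,3) by blast+
  moreover have "degree h = degree a + degree b"
    using ab(1) \<open>h \<noteq> 0\<close> by (simp add: degree_mult_eq)
  ultimately show "\<exists>a. a dvd h \<and> 0 < degree a \<and> degree a < degree h"
    using ab(1) by (intro exI[of _ a]) auto
next
  assume "\<exists>a. a dvd h \<and> 0 < degree a \<and> degree a < degree h"
  then obtain a b where ab: "h = a * b" "0 < degree a" "degree a < degree h" by blast
  then have "a \<noteq> 0" "b \<noteq> 0" using deg by auto
  then have "0 < degree b" using ab by (auto simp: degree_mult_eq)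
  then show "\<not> irreducible h"
    using ab irreducibleD[of h a b] by (auto simp: is_unit_poly_iff)
qed

lemma exists_monic_irreducible_factor:
  fixes p :: "'a::field poly"
  assumes "0 < degree p"
  shows "\<exists>q. q dvd p \<and> irreducible q \<and> lead_coeff q = 1"
  using assms
proof (induction "degree p" arbitrary: p rule: less_induct)
  case less
  define p' where "p' = smult (inverse (lead_coeff p)) p"
  have p0: "p \<noteq> 0" using less.prems by auto
  have p': "lead_coeff p' = 1" "degree p' = degree p" "p' dvd p"
    unfolding p'_def using p0 by (simp_all add: smult_dvd)
  show ?case
  proof (cases "irreducible p'")
    case True
    then show ?thesis using p' by blast
  next
    case False
    then obtain a where "a dvd p'" "0 < degree a" "degree a < degree p"
      using reducible_monic_poly_iff[of p'] p' less.prems by auto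
    moreover from this less.hyps[of a] obtain q where "q dvd a" "irreducible q" "lead_coeff q = 1"
      using p'(2) by auto
    ultimately show ?thesis using p'(3) by (blast intro: dvd_trans)
  qed
qed

lemma prod_monic_irreducible_dvd:
  fixes S :: "'a::field poly set"
  assumes "finite S" "\<And>q. q \<in> S \<Longrightarrow> irreducible q \<and> lead_coeff q = 1 \<and> q dvd p"
  shows "\<Prod>S dvd p"
  using assms
proof (induction S rule: finite_induct)
  case empty
  then show ?case by simp
next
  case (insert s S)
  then obtain r where r: "p = \<Prod>S * r" by (meson dvdE insertCI)
  have s: "irreducible s" "lead_coeff s = 1" "s dvd p" using insert.prems by auto
  have prime: "prime_elem s" using s(1) by (rule field_poly_irreducible_imp_prime)
  have "\<not> s dvd \<Prod>S"
  proof
    assume "s dvd \<Prod>S"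
    then have "s dvd \<Prod>\<^sub># (mset_set S)" by (simp add: prod_unfold_prod_mset)
    then obtain t where t: "t \<in> S" "s dvd t"
      using insert.hyps(1) by (auto elim: prime_elem_dvd_prod_msetE[OF prime])
    have t': "irreducible t" "lead_coeff t = 1" using insert.prems t(1) by auto
    then have "t dvd s" using irreducibleD'[OF t'(1) t(2)] prime prime_elem_not_unit by blast
    then have "s = t"
      using monic_dvd_imp_eq[OF s(2) t'(2) t(2)] dvd_imp_degree_le[of t s] s(2) by fastforce
    then show False using t(1) insert.hyps(2) by blast
  qed
  then have "s dvd r" using prime s(3) r prime_elem_dvd_mult_iff by blast
  then show ?case using r insert.hyps by (simp add: mult.commute mult_dvd_mono)
qed

section \<open>Translations and subspace polynomials\<close>

definition translate_poly :: "'a::comm_ring_1 \<Rightarrow> 'a poly \<Rightarrow> 'a poly" where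
  "translate_poly a p = p \<circ>\<^sub>p [:a, 1:]"

lemma poly_translate_poly [simp]: "poly (translate_poly a p) x = poly p (a + x)"
  by (simp add: translate_poly_def poly_pcompose)

lemma translate_poly_0 [simp]: "translate_poly 0 p = p"
  by (simp add: translate_poly_def)

lemma translate_poly_translate_poly [simp]:
  "translate_poly b (translate_poly a p) = translate_poly (a + b) p"
  by (simp add: translate_poly_def pcompose_assoc[symmetric] pcompose_pCons)

lemma translate_poly_1 [simp]: "translate_poly a 1 = 1"
  by (simp add: translate_poly_def one_pCons)

lemma translate_poly_mult: "translate_poly a (p * q) = translate_poly a p * translate_poly a q"
  by (simp add: translate_poly_def pcompose_mult)

lemma translate_poly_diff: "translate_poly a (p - q) = translate_poly a p - translate_poly a q"
  by (simp add: translate_poly_def pcompose_diff)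

lemma translate_poly_const [simp]: "translate_poly a [:c:] = [:c:]"
  by (simp add: translate_poly_def)

lemma degree_translate_poly [simp]: "degree (translate_poly a (p::'a::idom poly)) = degree p"
  by (simp add: translate_poly_def degree_pcompose)

lemma lead_coeff_translate_poly [simp]:
  "lead_coeff (translate_poly a (p::'a::idom poly)) = lead_coeff p"
  by (simp add: translate_poly_def lead_coeff_comp)

lemma translate_poly_dvd: "p dvd q \<Longrightarrow> translate_poly a p dvd translate_poly a q"
  by (auto simp: translate_poly_mult)

lemma irreducible_translate_poly:
  fixes p :: "'a::idom poly"
  assumes "irreducible p"
  shows "irreducible (translate_poly a p)"
proof (rule irreducibleI)
  have untranslate: "translate_poly (- a) (translate_poly a q) = q" for q :: "'a poly" by simp
  have unit: "translate_poly b u dvd 1" if "u dvd 1" for b and u :: "'a poly"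
    using translate_poly_dvd[OF that, of b] by simp
  show "translate_poly a p \<noteq> 0"
    using assms untranslate[of p] by (auto simp: irreducible_def translate_poly_def)
  show "\<not> translate_poly a p dvd 1"
    using assms unit[of "translate_poly a p" "- a"] untranslate[of p] by (auto simp: irreducible_def)
  fix x y assume "translate_poly a p = x * y"
  then have "p = translate_poly (- a) x * translate_poly (- a) y"
    using untranslate[of p] by (simp add: translate_poly_mult)
  then have "translate_poly (- a) x dvd 1 \<or> translate_poly (- a) y dvd 1"
    using irreducibleD[OF assms] by blast
  then show "x dvd 1 \<or> y dvd 1"
    using unit[of "translate_poly (- a) x" a] unit[of "translate_poly (- a) y" a] by auto
qed

lemma poly_subspace_poly_eq_0_iff:
  "finite U \<Longrightarrow> poly (subspace_poly U) x = 0 \<longleftrightarrow> x \<in> U"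
  by (simp add: subspace_poly_def poly_prod)

lemma degree_subspace_poly: "finite U \<Longrightarrow> degree (subspace_poly U) = card U"
  by (simp add: subspace_poly_def degree_prod_eq_sum_degree)

lemma lead_coeff_subspace_poly [simp]: "lead_coeff (subspace_poly U) = 1"
  by (simp add: subspace_poly_def lead_coeff_prod)

lemma subspace_poly_eqI:
  assumes "finite U" "degree p = card U" "lead_coeff p = 1" "\<And>u. u \<in> U \<Longrightarrow> poly p u = 0"
  shows "subspace_poly U = p"
proof (rule poly_eqI_degree_lead_coeff[of _ "card U" _ U])
  show "coeff (subspace_poly U) (card U) = coeff p (card U)"
    using assms(1-3) lead_coeff_subspace_poly[of U] by (simp add: degree_subspace_poly)
qed (use assms in \<open>auto simp: degree_subspace_poly poly_subspace_poly_eq_0_iff\<close>)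

lemma translate_poly_subspace_poly:
  assumes U: "finite_additive_subgroup U" and u: "u \<in> U"
  shows "translate_poly u (subspace_poly U) = subspace_poly U"
proof (rule subspace_poly_eqI[symmetric])
  note U' = finite_additive_subgroupD[OF U]
  show "degree (translate_poly u (subspace_poly U)) = card U"
    by (simp add: degree_subspace_poly U'(1))
  show "lead_coeff (translate_poly u (subspace_poly U)) = 1"
    by (rule trans[OF lead_coeff_translate_poly lead_coeff_subspace_poly])
  show "poly (translate_poly u (subspace_poly U)) v = 0" if "v \<in> U" for v
    using U'(1,3) u that by (simp add: poly_subspace_poly_eq_0_iff)
qed (rule finite_additive_subgroupD(1)[OF U])

text \<open>\<open>L\<^sub>U(a + T) - L\<^sub>U(a)\<close> is monic of degree \<open>|U|\<close> and vanishes on \<open>U\<close>,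
  so it equals \<open>L\<^sub>U\<close>.\<close>
lemma poly_subspace_poly_add:
  assumes U: "finite_additive_subgroup U"
  shows "poly (subspace_poly U) (a + b) = poly (subspace_poly U) a + poly (subspace_poly U) b"
proof -
  let ?L = "subspace_poly U"
  note U' = finite_additive_subgroupD[OF U]
  have deg: "0 < degree (translate_poly a ?L)"
    using card_gt_0_if_finite_additive_subgroup[OF U] by (simp add: degree_subspace_poly U')
  have "?L = translate_poly a ?L - [:poly ?L a:]"
  proof (rule subspace_poly_eqI)
    fix u assume "u \<in> U"
    then have "poly ?L (a + u) = poly (translate_poly u ?L) a"
      by (simp add: add.commute)
    then show "poly (translate_poly a ?L - [:poly ?L a:]) u = 0"
      using translate_poly_subspace_poly[OF U \<open>u \<in> U\<close>] by simp
  next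
    show "degree (translate_poly a ?L - [:poly ?L a:]) = card U"
      using deg by (simp add: degree_diff_const degree_subspace_poly U'(1))
    show "lead_coeff (translate_poly a ?L - [:poly ?L a:]) = 1"
      by (simp only: lead_coeff_diff_const[OF deg] lead_coeff_translate_poly lead_coeff_subspace_poly)
  qed (rule U'(1))
  then have "poly ?L b = poly (translate_poly a ?L - [:poly ?L a:]) b" by simp
  then show ?thesis by simp
qed

lemma poly_subspace_poly_diff:
  assumes "finite_additive_subgroup U"
  shows "poly (subspace_poly U) (a - b) = poly (subspace_poly U) a - poly (subspace_poly U) b"
  using poly_subspace_poly_add[OF assms, of "a - b" b] by simp

lemma card_eq_card_image_mult_card_fiber:
  fixes V W :: "'a::ab_group_add set"
  assumes "finite V" "finite W"
    and closed: "\<And>v w. v \<in> V \<Longrightarrow> w \<in> W \<Longrightarrow> v + w \<in> V"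
    and fiber: "\<And>v v'. v \<in> V \<Longrightarrow> v' \<in> V \<Longrightarrow> \<phi> v' = \<phi> v \<longleftrightarrow> v' - v \<in> W"
  shows "card V = card (\<phi> ` V) * card W"
proof -
  have "card {x \<in> V. \<phi> x = \<phi> v} = card W" if v: "v \<in> V" for v
  proof -
    have "{x \<in> V. \<phi> x = \<phi> v} = (+) v ` W"
    proof (intro set_eqI iffI)
      fix x assume "x \<in> {x \<in> V. \<phi> x = \<phi> v}"
      then have "x - v \<in> W" "x = v + (x - v)" using fiber[OF v] by auto
      then show "x \<in> (+) v ` W" by blast
    next
      fix x assume "x \<in> (+) v ` W"
      then obtain w where "w \<in> W" "x = v + w" by blast
      then show "x \<in> {x \<in> V. \<phi> x = \<phi> v}" using closed[OF v] fiber[OF v] by auto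
    qed
    then show ?thesis by (simp add: card_image)
  qed
  then have "(\<Sum>y\<in>\<phi> ` V. card {x \<in> V. \<phi> x = y}) = (\<Sum>y\<in>\<phi> ` V. card W)"
    by (intro sum.cong) auto
  then have "(\<Sum>y\<in>\<phi> ` V. card {x \<in> V. \<phi> x = y}) = card (\<phi> ` V) * card W"
    by simp
  moreover have "(\<Sum>y\<in>\<phi> ` V. sum (\<lambda>_. 1::nat) {x \<in> V. \<phi> x = y}) = sum (\<lambda>_. 1) V"
    by (rule sum.group[OF assms(1) finite_imageI[OF assms(1)] subset_refl])
  ultimately show ?thesis by (simp flip: card_eq_sum)
qed

lemma subspace_poly_pcompose:
  assumes V: "finite_additive_subgroup V" and W: "finite_additive_subgroup W" and "W \<subseteq> V"
  shows "subspace_poly (poly (subspace_poly W) ` V) \<circ>\<^sub>p subspace_poly W = subspace_poly V"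
proof (rule subspace_poly_eqI[symmetric])
  let ?L = "subspace_poly W" and ?W' = "poly (subspace_poly W) ` V"
  note V' = finite_additive_subgroupD[OF V] and W' = finite_additive_subgroupD[OF W]
  have "card V = card ?W' * card W"
  proof (rule card_eq_card_image_mult_card_fiber[OF V'(1) W'(1)])
    fix v w assume "v \<in> V" "w \<in> W"
    then show "v + w \<in> V" using V'(3) \<open>W \<subseteq> V\<close> by blast
  next
    fix v v' assume "v \<in> V" "v' \<in> V"
    have "poly ?L v' = poly ?L v \<longleftrightarrow> poly ?L (v' - v) = 0"
      unfolding poly_subspace_poly_diff[OF W] by simp
    then show "poly ?L v' = poly ?L v \<longleftrightarrow> v' - v \<in> W"
      by (simp only: poly_subspace_poly_eq_0_iff[OF W'(1)])
  qed
  then show "degree (subspace_poly ?W' \<circ>\<^sub>p ?L) = card V"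
    by (simp only: degree_pcompose degree_subspace_poly V'(1) W'(1) finite_imageI)
  have "0 < degree ?L"
    using card_gt_0_if_finite_additive_subgroup[OF W] by (simp only: degree_subspace_poly W'(1))
  then show "lead_coeff (subspace_poly ?W' \<circ>\<^sub>p ?L) = 1"
    by (simp only: lead_coeff_comp lead_coeff_subspace_poly power_one mult_1)
  show "finite V" by (rule V'(1))
  fix v assume "v \<in> V"
  then show "poly (subspace_poly ?W' \<circ>\<^sub>p ?L) v = 0"
    using V'(1) by (simp add: poly_pcompose poly_subspace_poly_eq_0_iff)
qed

locale comm_ring_hom =
  fixes \<phi> :: "'a::comm_ring_1 \<Rightarrow> 'b::comm_ring_1"
  assumes hom_add: "\<phi> (x + y) = \<phi> x + \<phi> y"
    and hom_mult: "\<phi> (x * y) = \<phi> x * \<phi> y"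
    and hom_one: "\<phi> 1 = 1"
begin

lemma hom_zero [simp]: "\<phi> 0 = 0"
  using hom_add[of 0 0] by simp

lemma hom_uminus: "\<phi> (- x) = - \<phi> x"
  using hom_add[of x "- x"] by (simp add: add_eq_0_iff2)

lemma hom_prod: "\<phi> (prod f A) = (\<Prod>a\<in>A. \<phi> (f a))"
  by (induction A rule: infinite_finite_induct) (simp_all add: hom_one hom_mult)

lemma map_poly_add: "map_poly \<phi> (p + q) = map_poly \<phi> p + map_poly \<phi> q"
  by (rule poly_eqI) (simp add: coeff_map_poly hom_add)

lemma map_poly_mult: "map_poly \<phi> (p * q) = map_poly \<phi> p * map_poly \<phi> q"
  by (induction p) (simp_all add: map_poly_pCons map_poly_add map_poly_smult hom_mult)

lemma comm_ring_hom_map_poly: "comm_ring_hom (map_poly \<phi>)"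
  by unfold_locales (simp_all add: map_poly_add map_poly_mult hom_one)

lemma poly_map_poly: "poly (map_poly \<phi> p) (\<phi> x) = \<phi> (poly p x)"
  by (induction p) (simp_all add: map_poly_pCons hom_add hom_mult)

lemma map_poly_pcompose: "map_poly \<phi> (p \<circ>\<^sub>p q) = map_poly \<phi> p \<circ>\<^sub>p map_poly \<phi> q"
  by (induction p) (simp_all add: map_poly_pCons pcompose_pCons map_poly_add map_poly_mult)

end

lemma comm_ring_hom_const_poly: "comm_ring_hom (\<lambda>c::'a::comm_ring_1. [:c:])"
  by unfold_locales (simp_all add: one_pCons)

lemma comm_ring_hom_to_fract: "comm_ring_hom to_fract"
  by unfold_locales simp_all

lemma map_poly_subspace_poly:
  fixes \<phi> :: "'a::field \<Rightarrow> 'b::field"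
  assumes "comm_ring_hom \<phi>" "inj_on \<phi> U"
  shows "map_poly \<phi> (subspace_poly U) = subspace_poly (\<phi> ` U)"
proof -
  interpret comm_ring_hom \<phi> by fact
  have "map_poly \<phi> (subspace_poly U) = (\<Prod>u\<in>U. [:- \<phi> u, 1:])"
    unfolding subspace_poly_def comm_ring_hom.hom_prod[OF comm_ring_hom_map_poly]
    by (simp add: map_poly_pCons hom_uminus hom_one)
  also have "\<dots> = subspace_poly (\<phi> ` U)"
    unfolding subspace_poly_def using assms(2) by (simp add: prod.reindex)
  finally show ?thesis .
qed

lemma finite_additive_subgroup_image:
  assumes "comm_ring_hom \<phi>" "finite_additive_subgroup V"
  shows "finite_additive_subgroup (\<phi> ` V)"
  unfolding finite_additive_subgroup_def
proof (intro conjI ballI)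
  interpret comm_ring_hom \<phi> by fact
  note V = finite_additive_subgroupD[OF assms(2)]
  show "finite (\<phi> ` V)" using V(1) by simp
  show "0 \<in> \<phi> ` V" using V(2) hom_zero by (metis image_eqI)
  fix x y assume "x \<in> \<phi> ` V" "y \<in> \<phi> ` V"
  then obtain u v where "u \<in> V" "v \<in> V" "x = \<phi> u" "y = \<phi> v" by blast
  then show "x + y \<in> \<phi> ` V" "- x \<in> \<phi> ` V"
    using V(3)[of u v] V(4)[of u] hom_add[of u v] hom_uminus[of u] by (metis image_eqI)+
qed

lemma finite_additive_subgroup_preimage:
  assumes hom: "comm_ring_hom \<phi>" and "inj_on \<phi> V"
    and V: "finite_additive_subgroup V" and W: "finite_additive_subgroup W" and "W \<subset> \<phi> ` V"
  obtains W\<^sub>0 where "finite_additive_subgroup W\<^sub>0" "W\<^sub>0 \<subset> V" "W = \<phi> ` W\<^sub>0"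
proof
  interpret comm_ring_hom \<phi> by fact
  define W\<^sub>0 where "W\<^sub>0 = {v \<in> V. \<phi> v \<in> W}"
  note V' = finite_additive_subgroupD[OF V] and W' = finite_additive_subgroupD[OF W]
  show "W = \<phi> ` W\<^sub>0" using \<open>W \<subset> \<phi> ` V\<close> by (auto simp: W\<^sub>0_def)
  then show "W\<^sub>0 \<subset> V" using \<open>W \<subset> \<phi> ` V\<close> by (auto simp: W\<^sub>0_def)
  show "finite_additive_subgroup W\<^sub>0"
    unfolding finite_additive_subgroup_def W\<^sub>0_def
    using V' W' by (auto simp: hom_add hom_uminus)
qed

section \<open>Irreducible factors of \<open>L\<^sub>V - c\<close> over a field\<close>

definition translation_stabilizer :: "'a::comm_ring_1 set \<Rightarrow> 'a poly \<Rightarrow> 'a set" where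
  "translation_stabilizer V p = {v \<in> V. translate_poly v p = p}"

lemma finite_additive_subgroup_translation_stabilizer:
  assumes "finite_additive_subgroup V"
  shows "finite_additive_subgroup (translation_stabilizer V p)"
  unfolding finite_additive_subgroup_def translation_stabilizer_def
proof (intro conjI ballI)
  note V = finite_additive_subgroupD[OF assms]
  show "finite {v \<in> V. translate_poly v p = p}" using V(1) by simp
  show "0 \<in> {v \<in> V. translate_poly v p = p}" using V(2) by simp
  fix a b assume a: "a \<in> {v \<in> V. translate_poly v p = p}" and b: "b \<in> {v \<in> V. translate_poly v p = p}"
  then show "a + b \<in> {v \<in> V. translate_poly v p = p}"
    using V(3) translate_poly_translate_poly[of b a p] by simp
  have "translate_poly (- a) p = translate_poly (- a) (translate_poly a p)" using a by simp
  then show "- a \<in> {v \<in> V. translate_poly v p = p}" using a V(4) by simp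
qed

lemma card_translation_orbit_stabilizer:
  assumes V: "finite_additive_subgroup V"
  shows "card V = card ((\<lambda>v. translate_poly v p) ` V) * card (translation_stabilizer V p)"
proof (rule card_eq_card_image_mult_card_fiber)
  note V' = finite_additive_subgroupD[OF V]
  show "finite V" by (rule V'(1))
  show "finite (translation_stabilizer V p)"
    by (rule finite_additive_subgroupD(1)[OF finite_additive_subgroup_translation_stabilizer[OF V]])
  show "v + w \<in> V" if "v \<in> V" "w \<in> translation_stabilizer V p" for v w
    using that V'(3) by (simp add: translation_stabilizer_def)
  fix v v' assume vv': "v \<in> V" "v' \<in> V"
  have "translate_poly v' p = translate_poly v p \<longleftrightarrow> translate_poly (v' - v) p = p"
  proof
    assume "translate_poly v' p = translate_poly v p"
    then have "translate_poly (- v) (translate_poly v' p) = translate_poly (- v) (translate_poly v p)"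
      by simp
    then show "translate_poly (v' - v) p = p" by simp
  next
    assume "translate_poly (v' - v) p = p"
    then have "translate_poly v (translate_poly (v' - v) p) = translate_poly v p" by simp
    then show "translate_poly v' p = translate_poly v p" by simp
  qed
  then show "translate_poly v' p = translate_poly v p \<longleftrightarrow> v' - v \<in> translation_stabilizer V p"
    using V'(5) vv' by (auto simp: translation_stabilizer_def)
qed

text \<open>The distinct translates of \<open>A\<close> are monic irreducible factors of the
  translation-invariant polynomial \<open>L\<^sub>V - c\<close>, so their product divides it; there are
  \<open>|V| / |W|\<close> of them.\<close>
lemma degree_le_card_translation_stabilizer:
  fixes V :: "'a::field set"
  assumes V: "finite_additive_subgroup V"
    and A: "irreducible A" "lead_coeff A = 1" "A dvd subspace_poly V - [:c:]"
  shows "degree A \<le> card (translation_stabilizer V A)"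
proof -
  let ?h = "subspace_poly V - [:c:]" and ?orbit = "(\<lambda>v. translate_poly v A) ` V"
  note V' = finite_additive_subgroupD[OF V]
  have card: "0 < card V" by (rule card_gt_0_if_finite_additive_subgroup[OF V])
  then have deg_h: "degree ?h = card V"
    by (simp only: degree_diff_const degree_subspace_poly V'(1))
  then have "?h \<noteq> 0" using card by auto
  have "\<Prod>?orbit dvd ?h"
  proof (rule prod_monic_irreducible_dvd)
    fix q assume "q \<in> ?orbit"
    then obtain v where v: "v \<in> V" "q = translate_poly v A" by blast
    have "translate_poly v ?h = ?h"
      using translate_poly_subspace_poly[OF V v(1)] by (simp add: translate_poly_diff)
    moreover have "lead_coeff q = 1" using v(2) A(2) by (simp only: lead_coeff_translate_poly)
    ultimately show "irreducible q \<and> lead_coeff q = 1 \<and> q dvd ?h"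
      using v translate_poly_dvd[OF A(3), of v] irreducible_translate_poly[OF A(1)] by auto
  qed (use V'(1) in simp)
  then have "degree (\<Prod>?orbit) \<le> card V"
    using dvd_imp_degree_le[of "\<Prod>?orbit" ?h] \<open>?h \<noteq> 0\<close> deg_h by simp
  moreover have "degree (\<Prod>?orbit) = card ?orbit * degree A"
  proof -
    have "degree (\<Prod>?orbit) = (\<Sum>q\<in>?orbit. degree q)"
    proof (rule degree_prod_eq_sum_degree, rule ballI)
      fix q assume "q \<in> ?orbit"
      then obtain v where "q = translate_poly v A" by blast
      then have "lead_coeff q = 1" using A(2) by (simp only: lead_coeff_translate_poly)
      then show "q \<noteq> 0" by auto
    qed
    also have "\<dots> = (\<Sum>q\<in>?orbit. degree A)" by (rule sum.cong) auto
    finally show ?thesis by simp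
  qed
  moreover have "card V = card ?orbit * card (translation_stabilizer V A)"
    by (rule card_translation_orbit_stabilizer[OF V])
  ultimately have "card ?orbit * degree A \<le> card ?orbit * card (translation_stabilizer V A)"
    by linarith
  moreover have "0 < card ?orbit" using V'(1,2) card_gt_0_iff by blast
  ultimately show ?thesis by simp
qed

lemma subspace_poly_translation_stabilizer:
  fixes V :: "'a::field set"
  assumes V: "finite_additive_subgroup V"
    and A: "0 < degree A" "lead_coeff A = 1" "degree A \<le> card (translation_stabilizer V A)"
  shows "subspace_poly (translation_stabilizer V A) = A - [:coeff A 0:]"
proof (rule subspace_poly_eqI)
  let ?W = "translation_stabilizer V A" and ?B = "A - [:coeff A 0:]"
  show fin: "finite ?W"
    by (rule finite_additive_subgroupD(1)[OF finite_additive_subgroup_translation_stabilizer[OF V]])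
  show lc: "lead_coeff ?B = 1" using A(1,2) by (simp only: lead_coeff_diff_const)
  show root: "poly ?B w = 0" if "w \<in> ?W" for w
  proof -
    have "poly A w = poly (translate_poly w A) 0" by simp
    also have "\<dots> = coeff A 0" using that by (simp add: translation_stabilizer_def poly_0_coeff_0)
    finally show ?thesis by simp
  qed
  have "card ?W \<le> card {x. poly ?B x = 0}"
    using root lc by (intro card_mono poly_roots_finite) auto
  also have "\<dots> \<le> degree ?B" using lc by (intro card_poly_roots_bound) auto
  finally show "degree ?B = card ?W" using A by (simp add: degree_diff_const)
qed

lemma dvd_pcompose_diff_const:
  fixes p q :: "'a::comm_ring_1 poly"
  shows "p - [:y:] dvd q \<circ>\<^sub>p p - [:poly q y:]"
proof -
  have "[:- y, 1:] dvd q - [:poly q y:]" by (simp add: poly_eq_0_iff_dvd[symmetric])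
  then obtain r where "q - [:poly q y:] = [:- y, 1:] * r" ..
  then have "(q - [:poly q y:]) \<circ>\<^sub>p p = ([:- y, 1:] \<circ>\<^sub>p p) * (r \<circ>\<^sub>p p)"
    by (simp only: pcompose_mult)
  then have "[:- y, 1:] \<circ>\<^sub>p p dvd (q - [:poly q y:]) \<circ>\<^sub>p p" by simp
  moreover have "[:- y, 1:] \<circ>\<^sub>p p = p - [:y:]" by (simp add: pcompose_pCons)
  ultimately show ?thesis by (simp add: pcompose_diff)
qed

lemma decomposition_if_factor_subspace_poly_diff_const:
  fixes V :: "'a::field set"
  assumes V: "finite_additive_subgroup V"
    and a: "a dvd subspace_poly V - [:c:]" "0 < degree a" "degree a < card V"
  shows "\<exists>W g. finite_additive_subgroup W \<and> W \<subset> V \<and>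
           poly (subspace_poly (poly (subspace_poly W) ` V)) g = c"
proof -
  obtain A where A: "A dvd a" "irreducible A" "lead_coeff A = 1"
    using exists_monic_irreducible_factor[OF a(2)] by blast
  have A_dvd: "A dvd subspace_poly V - [:c:]" using A(1) a(1) by (rule dvd_trans)
  define W where "W = translation_stabilizer V A"
  have W: "finite_additive_subgroup W" "W \<subseteq> V"
    unfolding W_def using finite_additive_subgroup_translation_stabilizer[OF V]
    by (auto simp: translation_stabilizer_def)
  have "0 < degree A" using A(2) by (auto simp: irreducible_def is_unit_iff_degree)
  then have LW: "subspace_poly W = A - [:coeff A 0:]"
    unfolding W_def
    using subspace_poly_translation_stabilizer degree_le_card_translation_stabilizer A A_dvd V
    by blast
  have "card W = degree (subspace_poly W)"
    by (simp add: degree_subspace_poly finite_additive_subgroupD(1)[OF W(1)])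
  also have "\<dots> = degree A" unfolding LW by (rule degree_diff_const[OF \<open>0 < degree A\<close>])
  also have "\<dots> < card V"
    using dvd_imp_degree_le[OF A(1)] a(2,3) by fastforce
  finally have "W \<subset> V" using W(2) by auto
  define g where "g = - coeff A 0"
  let ?P = "subspace_poly (poly (subspace_poly W) ` V)"
  have A_eq: "A = subspace_poly W - [:g:]" using LW by (simp add: g_def)
  have "subspace_poly W - [:g:] dvd ?P \<circ>\<^sub>p subspace_poly W - [:poly ?P g:]"
    by (rule dvd_pcompose_diff_const)
  then have "A dvd subspace_poly V - [:poly ?P g:]"
    by (simp only: A_eq[symmetric] subspace_poly_pcompose[OF V W])
  then have "A dvd [:poly ?P g - c:]"
    using A_dvd dvd_diff[of A "subspace_poly V - [:c:]" "subspace_poly V - [:poly ?P g:]"]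
    by (simp add: diff_pCons)
  then have "poly ?P g = c" using const_eq_0_if_dvd \<open>0 < degree A\<close> by fastforce
  then show ?thesis using W(1) \<open>W \<subset> V\<close> by blast
qed

section \<open>The bivariate polynomial \<open>h\<close>\<close>

lemma
  fixes V :: "'a::field set"
  assumes "finite_additive_subgroup V"
  shows degree_h_poly: "degree (h_poly V f) = card V"
    and lead_coeff_h_poly: "lead_coeff (h_poly V f) = 1"
proof -
  let ?L = "map_poly (\<lambda>c. [:c:]) (subspace_poly V)"
  have deg: "degree ?L = card V"
    by (simp add: degree_map_poly degree_subspace_poly finite_additive_subgroupD(1)[OF assms])
  then have "0 < degree ?L" using card_gt_0_if_finite_additive_subgroup[OF assms] by simp
  moreover have "lead_coeff ?L = 1"
    by (subst lead_coeff_map_poly_nz) (simp_all add: one_pCons)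
  ultimately show "degree (h_poly V f) = card V" "lead_coeff (h_poly V f) = 1"
    unfolding h_poly_def using deg degree_diff_const lead_coeff_diff_const by metis+
qed

lemma proper_factor_h_poly_if_decomposition:
  fixes V W :: "'a::field set"
  assumes V: "finite_additive_subgroup V" and W: "finite_additive_subgroup W" and "W \<subset> V"
    and f: "f = subspace_poly (poly (subspace_poly W) ` V) \<circ>\<^sub>p g"
  shows "\<exists>a. a dvd h_poly V f \<and> 0 < degree a \<and> degree a < card V"
proof -
  interpret const: comm_ring_hom "\<lambda>c::'a. [:c:]" by (rule comm_ring_hom_const_poly)
  let ?E = "map_poly (\<lambda>c::'a. [:c:])" and ?P = "subspace_poly (poly (subspace_poly W) ` V)"
  have "?E (subspace_poly V) = ?E ?P \<circ>\<^sub>p ?E (subspace_poly W)"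
    unfolding subspace_poly_pcompose[OF V W psubset_imp_subset[OF \<open>W \<subset> V\<close>], symmetric]
    by (rule const.map_poly_pcompose)
  moreover have "f = poly (?E ?P) g" unfolding f by (rule pcompose_altdef)
  ultimately have "?E (subspace_poly W) - [:g:] dvd h_poly V f"
    unfolding h_poly_def by (simp only: dvd_pcompose_diff_const)
  moreover have "0 < card W" "card W < card V"
    using card_gt_0_if_finite_additive_subgroup[OF W]
      psubset_card_mono[OF finite_additive_subgroupD(1)[OF V] \<open>W \<subset> V\<close>] by auto
  moreover have "degree (?E (subspace_poly W) - [:g:]) = card W"
    using \<open>0 < card W\<close> finite_additive_subgroupD(1)[OF W]
    by (simp add: degree_diff_const degree_map_poly degree_subspace_poly)
  ultimately show ?thesis by (intro exI[of _ "?E (subspace_poly W) - [:g:]"]) simp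
qed

lemma poly_fract_coprime_representation:
  fixes g :: "'a::field poly fract"
  obtains a b where "g = Fract a b" "b \<noteq> 0" "\<And>x. poly b x = 0 \<Longrightarrow> poly a x \<noteq> 0"
proof -
  define rep where "rep b \<longleftrightarrow> b \<noteq> 0 \<and> (\<exists>a. g = Fract a b)" for b
  obtain a0 b0 where "g = Fract a0 b0" "b0 \<noteq> 0" by (cases g) auto
  then have "rep b0" by (auto simp: rep_def)
  then obtain b where "rep b" and min: "\<And>b'. rep b' \<Longrightarrow> degree b \<le> degree b'"
    using ex_has_least_nat[of rep b0 degree] by blast
  then obtain a where ab: "g = Fract a b" "b \<noteq> 0" by (auto simp: rep_def)
  have "poly a x \<noteq> 0" if "poly b x = 0" for x
  proof
    assume "poly a x = 0"
    with \<open>poly b x = 0\<close> obtain a' b' where a': "a = [:- x, 1:] * a'" and b': "b = [:- x, 1:] * b'"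
      by (metis dvdE poly_eq_0_iff_dvd)
    then have "b' \<noteq> 0" using ab(2) by auto
    have "g = Fract a' b'" using ab(1) mult_fract_cancel[of "[:- x, 1:]" a' b'] unfolding a' b' by simp
    then have "rep b'" using \<open>b' \<noteq> 0\<close> by (auto simp: rep_def)
    moreover have "degree b = Suc (degree b')"
      using \<open>b' \<noteq> 0\<close> unfolding b' by (subst degree_mult_eq) auto
    ultimately show False using min[of b'] by simp
  qed
  then show ?thesis using ab that by blast
qed

text \<open>Here \<open>g\<close> is a root of a monic polynomial over \<open>F[x]\<close>, so a root of its reduced
  denominator would also be a root of its numerator.\<close>
lemma to_fract_poly_if_prod_diff_eq:
  fixes g :: "'a::alg_closed_field poly fract"
  assumes U: "finite U" "U \<noteq> {}" and prod: "(\<Prod>u\<in>U. g - to_fract [:u:]) = to_fract f"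
  obtains r where "g = to_fract r"
proof -
  obtain a b where ab: "g = Fract a b" "b \<noteq> 0" and coprime: "\<And>x. poly b x = 0 \<Longrightarrow> poly a x \<noteq> 0"
    using poly_fract_coprime_representation[of g] by blast
  have "degree b = 0"
  proof (rule ccontr)
    assume "degree b \<noteq> 0"
    then obtain x where x: "poly b x = 0" using alg_closed_imp_poly_has_root by blast
    have "(\<Prod>u\<in>F. Fract (a - [:u:] * b) b) = Fract (\<Prod>u\<in>F. a - [:u:] * b) (b ^ card F)"
      if "finite F" for F
      using that ab(2) by (induction F rule: finite_induct) (simp_all add: One_fract_def)
    moreover have "g - to_fract [:u:] = Fract (a - [:u:] * b) b" for u
      using ab by (simp add: to_fract_def diff_fract)
    ultimately have "Fract (\<Prod>u\<in>U. a - [:u:] * b) (b ^ card U) = (\<Prod>u\<in>U. g - to_fract [:u:])"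
      using U(1) by simp
    then have "(\<Prod>u\<in>U. a - [:u:] * b) = f * b ^ card U"
      using prod ab(2) by (simp add: to_fract_def eq_fract)
    moreover have "poly (\<Prod>u\<in>U. a - [:u:] * b) x = poly a x ^ card U"
      using x by (simp add: poly_prod)
    moreover have "0 < card U" using U card_gt_0_iff by blast
    ultimately have "poly a x ^ card U = 0" using x by (simp add: poly_power zero_power)
    then show False using coprime[OF x] by simp
  qed
  then obtain c where "b = [:c:]" by (rule degree_eq_zeroE)
  then have "g = to_fract (smult (inverse c) a)"
    using ab by (simp add: to_fract_def eq_fract)
  then show ?thesis by (rule that)
qed

lemma decomposition_if_factor_h_poly:
  fixes V :: "'a::alg_closed_field set"
  assumes V: "finite_additive_subgroup V"
    and a: "a dvd h_poly V f" "0 < degree a" "degree a < card V"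
  shows "\<exists>g W. finite_additive_subgroup W \<and> W \<subset> V \<and>
           f = subspace_poly (poly (subspace_poly W) ` V) \<circ>\<^sub>p g"
proof -
  define emb :: "'a \<Rightarrow> 'a poly fract" where "emb c = to_fract [:c:]" for c
  have hom: "comm_ring_hom emb"
    unfolding emb_def by unfold_locales (simp_all flip: to_fract_add to_fract_mult one_pCons)
  interpret emb: comm_ring_hom emb by (rule hom)
  have inj: "inj_on emb X" for X unfolding emb_def by (simp add: inj_on_def)
  have fract_const: "fract_poly (map_poly (\<lambda>c. [:c:]) p) = map_poly emb p" for p :: "'a poly"
    by (simp add: map_poly_map_poly o_def emb_def[abs_def])
  have "fract_poly (h_poly V f) = subspace_poly (emb ` V) - [:to_fract f:]"
    by (simp add: h_poly_def fract_const map_poly_subspace_poly[OF hom inj] map_poly_pCons)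
  then have a\<^sub>K: "fract_poly a dvd subspace_poly (emb ` V) - [:to_fract f:]"
    using fract_poly_dvd[OF a(1)] by simp
  have "degree (fract_poly a) = degree a" by (simp add: degree_map_poly)
  moreover have "card (emb ` V) = card V" using inj by (simp add: card_image)
  moreover have V\<^sub>K: "finite_additive_subgroup (emb ` V)" by (rule finite_additive_subgroup_image[OF hom V])
  ultimately obtain W\<^sub>K g\<^sub>K where W\<^sub>K: "finite_additive_subgroup W\<^sub>K" "W\<^sub>K \<subset> emb ` V"
    and g\<^sub>K: "poly (subspace_poly (poly (subspace_poly W\<^sub>K) ` emb ` V)) g\<^sub>K = to_fract f"
    using decomposition_if_factor_subspace_poly_diff_const[OF V\<^sub>K a\<^sub>K] a(2,3) by auto
  obtain W where W: "finite_additive_subgroup W" "W \<subset> V" "W\<^sub>K = emb ` W"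
    using finite_additive_subgroup_preimage[OF hom inj V W\<^sub>K] .
  define W' where "W' = poly (subspace_poly W) ` V"
  have "poly (subspace_poly W\<^sub>K) ` emb ` V = emb ` W'"
    unfolding W(3) W'_def map_poly_subspace_poly[OF hom inj, symmetric] image_image emb.poly_map_poly ..
  then have g\<^sub>K': "poly (subspace_poly (emb ` W')) g\<^sub>K = to_fract f" using g\<^sub>K by simp
  have "poly (subspace_poly (emb ` W')) g\<^sub>K = (\<Prod>u\<in>W'. g\<^sub>K - emb u)"
    unfolding subspace_poly_def poly_prod using inj[of W'] by (simp add: prod.reindex)
  then have "(\<Prod>u\<in>W'. g\<^sub>K - to_fract [:u:]) = to_fract f" using g\<^sub>K' by (simp add: emb_def)
  then obtain r where r: "g\<^sub>K = to_fract r"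
    using to_fract_poly_if_prod_diff_eq[of W'] V W'_def finite_additive_subgroupD(1,2)[OF V] by blast
  have "to_fract f = poly (map_poly emb (subspace_poly W')) (to_fract r)"
    using g\<^sub>K' r by (simp add: map_poly_subspace_poly[OF hom inj])
  also have "\<dots> = to_fract (poly (map_poly (\<lambda>c. [:c:]) (subspace_poly W')) r)"
    unfolding fract_const[symmetric] by (rule comm_ring_hom.poly_map_poly[OF comm_ring_hom_to_fract])
  finally have "f = subspace_poly W' \<circ>\<^sub>p r" by (simp add: pcompose_altdef)
  then show ?thesis using W(1,2) W'_def by blast
qed

theorem proposition4p8:
  fixes p :: nat and V :: "'a::alg_closed_field set" and f :: "'a poly"
  assumes "prime p"
    and "CHAR('a) = p"
    and "algebraic_over_prime_field TYPE('a)"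
    and "finite_additive_subgroup V"
  shows "\<not> irreducible (h_poly V f) \<longleftrightarrow>
    (\<exists>g W. finite_additive_subgroup W \<and> W \<subset> V \<and>
       f = pcompose (subspace_poly (poly (subspace_poly W) ` V)) g)"
proof -
  note V = \<open>finite_additive_subgroup V\<close>
  have "0 < degree (h_poly V f)"
    using degree_h_poly[OF V] card_gt_0_if_finite_additive_subgroup[OF V] by simp
  then have "\<not> irreducible (h_poly V f) \<longleftrightarrow>
      (\<exists>a. a dvd h_poly V f \<and> 0 < degree a \<and> degree a < card V)"
    using reducible_monic_poly_iff[OF lead_coeff_h_poly[OF V]] degree_h_poly[OF V] by simp
  also have "\<dots> \<longleftrightarrow> (\<exists>g W. finite_additive_subgroup W \<and> W \<subset> V \<and>
      f = pcompose (subspace_poly (poly (subspace_poly W) ` V)) g)"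
  proof
    assume "\<exists>a. a dvd h_poly V f \<and> 0 < degree a \<and> degree a < card V"
    then show "\<exists>g W. finite_additive_subgroup W \<and> W \<subset> V \<and>
      f = pcompose (subspace_poly (poly (subspace_poly W) ` V)) g"
      by (elim exE conjE) (rule decomposition_if_factor_h_poly[OF V])
  qed (elim exE conjE, rule proper_factor_h_poly_if_decomposition[OF V])
  finally show ?thesis .
qed

end
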